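(* Let $A \in L(H)$ and $\rho > 0$ with $\sigma(A) \cap S_\rho = \emptyset$, let $M_\rho \coloneqq \sup_{z \in S_\rho} |(z-A)^{-1}|_{L(H)}$, and let $F \colon \ell_{2,\rho}(\mathbb{Z}; H) \to \ell_{2,\rho}(\mathbb{Z}; H)$ have Lipschitz constant $|F|_{\operatorname{Lip}(\ell_{2,\rho}(\mathbb{Z}; H))} < 1/M_\rho$. Then the Lyapunov--Perron operator $$\mathcal{L}_\rho \colon H \times \ell_{2,\rho}(\mathbb{Z}; H) \to \ell_{2,\rho}(\mathbb{Z}; H),\qquad (x,u) \mapsto \chi_{\mathbb{Z}_{\geq 0}} (\tau - A)^{-1}(F(u) + \delta_{-1} x),$$ is well-defined, and for every $x \in H$ the map $\mathcal{L}_\rho(x, \cdot)$ is a contraction on $\ell_{2,\rho}(\mathbb{Z}; H)$.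
   Context: $H$ is a separable complex Hilbert space, $\sigma(A)$ the spectrum of $A$, $S_\rho=\{|z|=\rho\}$. $\ell_{2,\rho}(\mathbb{Z}; H) = \{u \in H^{\mathbb{Z}} : \sum_{k} |u_k|_H^2 \rho^{-2k} < \infty\}$. $\tau$ is the shift $(\tau u)_n = u_{n+1}$, $A$ acts componentwise $(Au)_n = Au_n$, $(\tau-A)^{-1}$ is the inverse of $\tau-A$ on $\ell_{2,\rho}(\mathbb{Z};H)$, $\delta_{-1}x$ is the sequence with entry $x$ at index $-1$ and $0$ elsewhere, and $\chi_{\mathbb{Z}_{\geq 0}}$ denotes multiplication by the indicator of $\mathbb{Z}_{\geq 0}$, i.e. $(\chi_{\mathbb{Z}_{\geq0}}v)_n = v_n$ for $n\ge0$ and $0$ for $n<0$. *)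

theory Defs
  imports "HOL-Analysis.Analysis"
begin

text \<open>A complex Hilbert space is modelled as a real Hilbert space (real inner product,
complete) together with a complex structure J: an orthogonal real-linear map with J (J x) = - x.\<close>

definition complex_structure :: "('h::real_inner \<Rightarrow> 'h) \<Rightarrow> bool" where
  "complex_structure J \<longleftrightarrow> bounded_linear J \<and> (\<forall>x. J (J x) = - x)
      \<and> (\<forall>x y. inner (J x) (J y) = inner x y)"

definition cscale :: "('h::real_vector \<Rightarrow> 'h) \<Rightarrow> complex \<Rightarrow> 'h \<Rightarrow> 'h" where
  "cscale J z x = Re z *\<^sub>R x + Im z *\<^sub>R J x"

definition bounded_clinear_op :: "('h::real_normed_vector \<Rightarrow> 'h) \<Rightarrow> ('h \<Rightarrow> 'h) \<Rightarrow> bool" where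
  "bounded_clinear_op J A \<longleftrightarrow> bounded_linear A \<and> (\<forall>x. A (J x) = J (A x))"

definition shifted_op :: "('h::real_vector \<Rightarrow> 'h) \<Rightarrow> ('h \<Rightarrow> 'h) \<Rightarrow> complex \<Rightarrow> 'h \<Rightarrow> 'h" where
  "shifted_op J A z = (\<lambda>x. cscale J z x - A x)"

definition spectrum :: "('h::real_normed_vector \<Rightarrow> 'h) \<Rightarrow> ('h \<Rightarrow> 'h) \<Rightarrow> complex set" where
  "spectrum J A = {z. \<not> (\<exists>B. bounded_clinear_op J B \<and> B \<circ> shifted_op J A z = id
                                   \<and> shifted_op J A z \<circ> B = id)}"

text \<open>Resolvent (z - A)^{-1} (meaningful for z outside the spectrum).\<close>
definition resolvent :: "('h::real_vector \<Rightarrow> 'h) \<Rightarrow> ('h \<Rightarrow> 'h) \<Rightarrow> complex \<Rightarrow> 'h \<Rightarrow> 'h" where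
  "resolvent J A z = inv (shifted_op J A z)"

definition l2rho :: "real \<Rightarrow> (int \<Rightarrow> 'h::real_normed_vector) set" where
  "l2rho \<rho> = {u. (\<lambda>k. (norm (u k))\<^sup>2 * \<rho> powi (-2 * k)) summable_on UNIV}"

definition l2rho_norm :: "real \<Rightarrow> (int \<Rightarrow> 'h::real_normed_vector) \<Rightarrow> real" where
  "l2rho_norm \<rho> u = sqrt (\<Sum>\<^sub>\<infinity>k. (norm (u k))\<^sup>2 * \<rho> powi (-2 * k))"

definition shift :: "(int \<Rightarrow> 'h) \<Rightarrow> int \<Rightarrow> 'h" where
  "shift u = (\<lambda>n. u (n + 1))"

definition tau_minus_A :: "('h::ab_group_add \<Rightarrow> 'h) \<Rightarrow> (int \<Rightarrow> 'h) \<Rightarrow> int \<Rightarrow> 'h" where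
  "tau_minus_A A u = (\<lambda>n. u (n + 1) - A (u n))"

definition delta_m1 :: "'h::zero \<Rightarrow> int \<Rightarrow> 'h" where
  "delta_m1 x = (\<lambda>n. if n = -1 then x else 0)"

definition chi_nonneg :: "(int \<Rightarrow> 'h::zero) \<Rightarrow> int \<Rightarrow> 'h" where
  "chi_nonneg v = (\<lambda>n. if n \<ge> 0 then v n else 0)"

end

theory Submission
  imports Defs
begin

text \<open>
  Conjugation with \<open>u \<mapsto> (\<rho>^-k u\<^sub>k)\<close> maps \<open>\<ell>\<^sub>2\<^sub>,\<^sub>\<rho>(\<int>;H)\<close> isometrically onto \<open>\<ell>\<^sub>2(\<int>;H)\<close> and
  turns \<open>\<tau> - A\<close> into \<open>T = \<rho>\<tau> - A\<close>. On sequences supported in a window of length \<open>N\<close> the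
  discrete Fourier transform is unitary up to the factor \<open>sqrt N\<close> and diagonalises \<open>T\<close>, with
  multipliers \<open>z\<^sub>j - A\<close>, \<open>z\<^sub>j = \<rho> exp (2\<pi>ij/N) \<in> S\<^sub>\<rho>\<close>. Hence \<open>\<parallel>v\<parallel> \<le> M\<^sub>\<rho> \<parallel>T v\<parallel>\<close> for finitely
  supported \<open>v\<close>, and by truncation for all \<open>v \<in> \<ell>\<^sub>2\<close>. Inverting the multipliers solves
  \<open>T p = u\<close> periodically on a window; a trapezoidal cut-off of slope \<open>1/L\<close> makes \<open>p\<close> a finitely
  supported approximate solution with residual at most \<open>\<rho> M\<^sub>\<rho> \<parallel>u\<parallel> / L\<close>. By the lower bound these
  approximate solutions converge, so \<open>T\<close> is bijective with \<open>\<parallel>T\<^sup>-\<^sup>1\<parallel> \<le> M\<^sub>\<rho>\<close>. Multiplication by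
  \<open>\<chi>\<^sub>\<int>\<^sub>\<ge>\<^sub>0\<close> does not increase norms, so \<open>\<L>\<^sub>\<rho>(x, \<cdot>)\<close> is Lipschitz with constant \<open>M\<^sub>\<rho> |F|\<^sub>L\<^sub>i\<^sub>p < 1\<close>.
\<close>

section \<open>Square-summable sequences on \<open>\<int>\<close>\<close>

definition square_summable :: "(int \<Rightarrow> 'a::real_normed_vector) \<Rightarrow> bool" where
  "square_summable v \<longleftrightarrow> (\<lambda>k. (norm (v k))\<^sup>2) summable_on UNIV"

definition l2_norm :: "(int \<Rightarrow> 'a::real_normed_vector) \<Rightarrow> real" where
  "l2_norm v = sqrt (\<Sum>\<^sub>\<infinity>k. (norm (v k))\<^sup>2)"

definition truncate :: "nat \<Rightarrow> (int \<Rightarrow> 'a::zero) \<Rightarrow> int \<Rightarrow> 'a" where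
  "truncate K v = (\<lambda>k. if \<bar>k\<bar> \<le> int K then v k else 0)"

lemma l2_norm_nonneg: "l2_norm v \<ge> 0"
  unfolding l2_norm_def by (simp add: infsum_nonneg)

lemma l2_norm_minus_commute: "l2_norm (\<lambda>k. v k - w k) = l2_norm (\<lambda>k. w k - v k)"
  unfolding l2_norm_def by (simp add: norm_minus_commute)

lemma L2_set_le_l2_norm:
  assumes "square_summable v" "finite F"
  shows "L2_set (\<lambda>k. norm (v k)) F \<le> l2_norm v"
proof -
  have "(\<Sum>k\<in>F. (norm (v k))\<^sup>2) \<le> (\<Sum>\<^sub>\<infinity>k. (norm (v k))\<^sup>2)"
    using assms by (intro finite_sum_le_infsum) (auto simp: square_summable_def)
  then show ?thesis unfolding L2_set_def l2_norm_def by simp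
qed

lemma norm_le_l2_norm: "square_summable v \<Longrightarrow> norm (v k) \<le> l2_norm v"
  using L2_set_le_l2_norm[of v "{k}"] by simp

lemma square_summable_l2_norm_le:
  assumes "\<And>F. finite F \<Longrightarrow> L2_set (\<lambda>k. norm (v k)) F \<le> C"
  shows "square_summable v \<and> l2_norm v \<le> C"
proof -
  have C: "C \<ge> 0" using assms[of "{}"] by simp
  have partial_sums: "(\<Sum>k\<in>F. (norm (v k))\<^sup>2) \<le> C\<^sup>2" if "finite F" for F
    using sqrt_le_D assms[OF that] unfolding L2_set_def .
  have summable: "(\<lambda>k. (norm (v k))\<^sup>2) summable_on UNIV"
    by (rule nonneg_bdd_above_summable_on) (auto intro!: bdd_aboveI partial_sums)
  have "(\<Sum>\<^sub>\<infinity>k. (norm (v k))\<^sup>2) \<le> C\<^sup>2"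
    by (rule infsum_le_finite_sums[OF summable]) (use partial_sums in auto)
  then show ?thesis using summable C by (simp add: square_summable_def l2_norm_def real_le_lsqrt)
qed

lemma
  assumes "finite S" "\<And>k. k \<notin> S \<Longrightarrow> v k = 0"
  shows square_summable_finite_support: "square_summable v"
    and l2_norm_finite_support: "l2_norm v = L2_set (\<lambda>k. norm (v k)) S"
proof -
  have "(\<lambda>k. (norm (v k))\<^sup>2) summable_on UNIV \<longleftrightarrow> (\<lambda>k. (norm (v k))\<^sup>2) summable_on S"
    by (rule summable_on_cong_neutral) (use assms in auto)
  then show "square_summable v" using assms(1) by (simp add: square_summable_def)
  have "(\<Sum>\<^sub>\<infinity>k. (norm (v k))\<^sup>2) = (\<Sum>\<^sub>\<infinity>k\<in>S. (norm (v k))\<^sup>2)"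
    by (rule infsum_cong_neutral) (use assms in auto)
  then show "l2_norm v = L2_set (\<lambda>k. norm (v k)) S"
    using assms(1) by (simp add: l2_norm_def L2_set_def)
qed

lemma
  assumes "square_summable v" "square_summable w"
  shows square_summable_add: "square_summable (\<lambda>k. v k + w k)"
    and l2_norm_add_le: "l2_norm (\<lambda>k. v k + w k) \<le> l2_norm v + l2_norm w"
proof -
  have "square_summable (\<lambda>k. v k + w k) \<and> l2_norm (\<lambda>k. v k + w k) \<le> l2_norm v + l2_norm w"
  proof (rule square_summable_l2_norm_le)
    fix F :: "int set" assume F: "finite F"
    have "L2_set (\<lambda>k. norm (v k + w k)) F \<le> L2_set (\<lambda>k. norm (v k) + norm (w k)) F"
      by (rule L2_set_mono) (auto simp: norm_triangle_ineq)
    also have "\<dots> \<le> L2_set (\<lambda>k. norm (v k)) F + L2_set (\<lambda>k. norm (w k)) F"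
      by (rule L2_set_triangle_ineq)
    also have "\<dots> \<le> l2_norm v + l2_norm w"
      using L2_set_le_l2_norm[OF assms(1) F] L2_set_le_l2_norm[OF assms(2) F] by simp
    finally show "L2_set (\<lambda>k. norm (v k + w k)) F \<le> l2_norm v + l2_norm w" .
  qed
  then show "square_summable (\<lambda>k. v k + w k)" "l2_norm (\<lambda>k. v k + w k) \<le> l2_norm v + l2_norm w"
    by auto
qed

lemma
  assumes "square_summable v" "square_summable w"
  shows square_summable_diff: "square_summable (\<lambda>k. v k - w k)"
    and l2_norm_diff_le: "l2_norm (\<lambda>k. v k - w k) \<le> l2_norm v + l2_norm w"
proof -
  have "square_summable (\<lambda>k. - w k)" "l2_norm (\<lambda>k. - w k) = l2_norm w"
    using assms(2) by (simp_all add: square_summable_def l2_norm_def)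
  then show "square_summable (\<lambda>k. v k - w k)" "l2_norm (\<lambda>k. v k - w k) \<le> l2_norm v + l2_norm w"
    using square_summable_add[OF assms(1), of "\<lambda>k. - w k"] l2_norm_add_le[OF assms(1), of "\<lambda>k. - w k"]
    by simp_all
qed

lemma square_summable_pointwise_limit:
  assumes "\<And>n. square_summable (V n)" "\<And>k. (\<lambda>n. V n k) \<longlonglongrightarrow> v k" "\<And>n. l2_norm (V n) \<le> C"
  shows "square_summable v"
proof -
  have "square_summable v \<and> l2_norm v \<le> C"
  proof (rule square_summable_l2_norm_le)
    fix F :: "int set" assume F: "finite F"
    have "(\<lambda>n. L2_set (\<lambda>k. norm (V n k)) F) \<longlonglongrightarrow> L2_set (\<lambda>k. norm (v k)) F"
      unfolding L2_set_def by (intro tendsto_intros assms(2))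
    moreover have "L2_set (\<lambda>k. norm (V n k)) F \<le> C" for n
      using L2_set_le_l2_norm[OF assms(1) F] assms(3) order_trans by blast
    ultimately show "L2_set (\<lambda>k. norm (v k)) F \<le> C" by (intro LIMSEQ_le_const2) auto
  qed
  then show ?thesis ..
qed

lemma finite_subset_int_interval:
  fixes S :: "int set"
  assumes "finite S"
  shows "\<exists>K::nat. S \<subseteq> {- int K..int K}"
proof -
  have "\<bar>k\<bar> \<le> (\<Sum>j\<in>S. \<bar>j\<bar>)" if "k \<in> S" for k
    using assms that by (intro member_le_sum) auto
  then show ?thesis by (intro exI[of _ "nat (\<Sum>j\<in>S. \<bar>j\<bar>)"]) force
qed

lemma finite_truncate_nonzero: "finite {k. truncate K v k \<noteq> 0}"
  by (rule finite_subset[of _ "{- int K..int K}"]) (auto simp: truncate_def)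

lemma l2_norm_diff_truncate_le:
  assumes "square_summable v" "e > 0"
  obtains K where "l2_norm (\<lambda>k. v k - truncate K v k) \<le> e"
proof -
  let ?f = "\<lambda>k. (norm (v k))\<^sup>2"
  have summable: "?f summable_on UNIV" using assms(1) by (simp add: square_summable_def)
  obtain F where F: "finite F" "dist (sum ?f F) (infsum ?f UNIV) \<le> e\<^sup>2"
    using infsum_finite_approximation[OF summable, of "e\<^sup>2"] assms(2) by auto
  obtain K where FI: "F \<subseteq> {- int K..int K}" using finite_subset_int_interval[OF F(1)] by blast
  define I where "I = {- int K..int K}"
  have "l2_norm (\<lambda>k. v k - truncate K v k) \<le> e"
  proof (rule square_summable_l2_norm_le[THEN conjunct2])
    fix G :: "int set" assume G: "finite G"
    have "(L2_set (\<lambda>k. norm (v k - truncate K v k)) G)\<^sup>2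
        = (\<Sum>k\<in>G. (norm (v k - truncate K v k))\<^sup>2)"
      unfolding L2_set_def by (simp add: sum_nonneg)
    also have "\<dots> = (\<Sum>k\<in>G - I. ?f k)"
      using G by (intro sum.mono_neutral_cong_right) (auto simp: I_def truncate_def)
    also have "\<dots> = sum ?f (G \<union> I) - sum ?f I"
      using G by (subst sum.subset_diff[of I "G \<union> I"]) (auto simp: I_def Un_Diff)
    also have "\<dots> \<le> infsum ?f UNIV - sum ?f F"
    proof -
      have "sum ?f (G \<union> I) \<le> infsum ?f UNIV"
        using G summable by (intro finite_sum_le_infsum) (auto simp: I_def)
      moreover have "sum ?f F \<le> sum ?f I" using FI by (intro sum_mono2) (auto simp: I_def)
      ultimately show ?thesis by linarith
    qed
    also have "\<dots> \<le> e\<^sup>2" using F(2) by (simp add: dist_real_def)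
    finally show "L2_set (\<lambda>k. norm (v k - truncate K v k)) G \<le> e"
      using assms(2) by (simp add: power2_le_iff_abs_le)
  qed
  then show ?thesis by (rule that)
qed

lemma
  assumes "square_summable v"
  shows square_summable_chi_nonneg: "square_summable (chi_nonneg v)"
    and l2_norm_chi_nonneg_le: "l2_norm (chi_nonneg v) \<le> l2_norm v"
proof -
  have "square_summable (chi_nonneg v) \<and> l2_norm (chi_nonneg v) \<le> l2_norm v"
  proof (rule square_summable_l2_norm_le)
    fix F :: "int set" assume F: "finite F"
    have "L2_set (\<lambda>k. norm (chi_nonneg v k)) F \<le> L2_set (\<lambda>k. norm (v k)) F"
      by (rule L2_set_mono) (auto simp: chi_nonneg_def)
    also have "\<dots> \<le> l2_norm v" by (rule L2_set_le_l2_norm[OF assms F])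
    finally show "L2_set (\<lambda>k. norm (chi_nonneg v k)) F \<le> l2_norm v" .
  qed
  then show "square_summable (chi_nonneg v)" "l2_norm (chi_nonneg v) \<le> l2_norm v" by auto
qed

section \<open>The weighted space and the operator \<open>\<rho>\<tau> - A\<close>\<close>

definition scaled_tau_minus_A :: "real \<Rightarrow> ('h::real_vector \<Rightarrow> 'h) \<Rightarrow> (int \<Rightarrow> 'h) \<Rightarrow> int \<Rightarrow> 'h" where
  "scaled_tau_minus_A r A v = (\<lambda>k. r *\<^sub>R v (k + 1) - A (v k))"

lemma scaled_tau_minus_A_diff:
  assumes "linear A"
  shows "scaled_tau_minus_A r A (\<lambda>k. v k - w k) = (\<lambda>k. scaled_tau_minus_A r A v k - scaled_tau_minus_A r A w k)"
  using linear_diff[OF assms] by (simp add: scaled_tau_minus_A_def fun_eq_iff algebra_simps)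

lemma
  assumes "bounded_linear A" "r \<ge> 0" "square_summable v"
  shows square_summable_scaled_tau_minus_A: "square_summable (scaled_tau_minus_A r A v)"
    and l2_norm_scaled_tau_minus_A_le:
      "l2_norm (scaled_tau_minus_A r A v) \<le> (r + onorm A) * l2_norm v"
proof -
  have A: "onorm A \<ge> 0" "norm (A x) \<le> onorm A * norm x" for x
    using onorm_pos_le[OF assms(1)] onorm[OF assms(1)] by auto
  have "square_summable (scaled_tau_minus_A r A v)
      \<and> l2_norm (scaled_tau_minus_A r A v) \<le> (r + onorm A) * l2_norm v"
  proof (rule square_summable_l2_norm_le)
    fix F :: "int set" assume F: "finite F"
    have "L2_set (\<lambda>k. norm (scaled_tau_minus_A r A v k)) F
        \<le> L2_set (\<lambda>k. r * norm (v (k + 1)) + onorm A * norm (v k)) F"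
    proof (rule L2_set_mono)
      fix k
      have "norm (scaled_tau_minus_A r A v k) \<le> norm (r *\<^sub>R v (k + 1)) + norm (A (v k))"
        unfolding scaled_tau_minus_A_def by (rule norm_triangle_ineq4)
      then show "norm (scaled_tau_minus_A r A v k) \<le> r * norm (v (k + 1)) + onorm A * norm (v k)"
        using assms(2) A(2)[of "v k"] by simp
    qed simp
    also have "\<dots> \<le> L2_set (\<lambda>k. r * norm (v (k + 1))) F + L2_set (\<lambda>k. onorm A * norm (v k)) F"
      by (rule L2_set_triangle_ineq)
    also have "\<dots> = r * L2_set (\<lambda>k. norm (v (k + 1))) F + onorm A * L2_set (\<lambda>k. norm (v k)) F"
      using assms(2) A(1) by (simp add: L2_set_right_distrib)
    also have "L2_set (\<lambda>k. norm (v (k + 1))) F = L2_set (\<lambda>k. norm (v k)) ((\<lambda>k. k + 1) ` F)"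
      unfolding L2_set_def by (subst sum.reindex) (auto simp: inj_on_def)
    also have "r * \<dots> + onorm A * L2_set (\<lambda>k. norm (v k)) F \<le> r * l2_norm v + onorm A * l2_norm v"
      using assms(2) A(1) L2_set_le_l2_norm[OF assms(3) F] L2_set_le_l2_norm[OF assms(3) finite_imageI[OF F]]
      by (intro add_mono mult_left_mono) auto
    finally show "L2_set (\<lambda>k. norm (scaled_tau_minus_A r A v k)) F \<le> (r + onorm A) * l2_norm v"
      by (simp add: algebra_simps)
  qed
  then show "square_summable (scaled_tau_minus_A r A v)"
    "l2_norm (scaled_tau_minus_A r A v) \<le> (r + onorm A) * l2_norm v" by auto
qed

lemma scaled_tau_minus_A_mult:
  assumes "linear A"
  shows "scaled_tau_minus_A r A (\<lambda>m. \<phi> m *\<^sub>R p m) m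
    = \<phi> m *\<^sub>R scaled_tau_minus_A r A p m + (r * (\<phi> (m + 1) - \<phi> m)) *\<^sub>R p (m + 1)"
  using linear_scale[OF assms]
  by (simp add: scaled_tau_minus_A_def algebra_simps)

definition to_l2 :: "real \<Rightarrow> (int \<Rightarrow> 'h::real_vector) \<Rightarrow> int \<Rightarrow> 'h" where
  "to_l2 r u = (\<lambda>k. r powi (- k) *\<^sub>R u k)"

definition from_l2 :: "real \<Rightarrow> (int \<Rightarrow> 'h::real_vector) \<Rightarrow> int \<Rightarrow> 'h" where
  "from_l2 r v = (\<lambda>k. r powi k *\<^sub>R v k)"

lemma to_l2_from_l2 [simp]: "r > 0 \<Longrightarrow> to_l2 r (from_l2 r v) = v"
  and from_l2_to_l2 [simp]: "r > 0 \<Longrightarrow> from_l2 r (to_l2 r v) = v"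
  by (simp_all add: to_l2_def from_l2_def fun_eq_iff power_int_add[symmetric])

lemma to_l2_add: "to_l2 r (\<lambda>k. u k + v k) = (\<lambda>k. to_l2 r u k + to_l2 r v k)"
  and to_l2_diff: "to_l2 r (\<lambda>k. u k - v k) = (\<lambda>k. to_l2 r u k - to_l2 r v k)"
  and to_l2_chi_nonneg: "to_l2 r (chi_nonneg u) = chi_nonneg (to_l2 r u)"
  by (simp_all add: to_l2_def chi_nonneg_def fun_eq_iff scaleR_add_right scaleR_diff_right)

lemma to_l2_tau_minus_A:
  assumes "r > 0" "linear A"
  shows "to_l2 r (tau_minus_A A u) = scaled_tau_minus_A r A (to_l2 r u)"
proof
  fix k
  have "r * r powi (- (k + 1)) = r powi (- k)"
    using assms(1) power_int_add_1'[of r "- (k + 1)"] by simp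
  then show "to_l2 r (tau_minus_A A u) k = scaled_tau_minus_A r A (to_l2 r u) k"
    using linear_scale[OF assms(2)] linear_diff[OF assms(2)]
    by (simp add: to_l2_def scaled_tau_minus_A_def tau_minus_A_def scaleR_diff_right)
qed

lemma
  fixes u :: "int \<Rightarrow> 'h::real_normed_vector"
  assumes "r > 0"
  shows l2rho_iff_square_summable: "u \<in> l2rho r \<longleftrightarrow> square_summable (to_l2 r u)"
    and l2rho_norm_eq_l2_norm: "l2rho_norm r u = l2_norm (to_l2 r u)"
proof -
  have "(norm (to_l2 r u k))\<^sup>2 = (norm (u k))\<^sup>2 * r powi (-2 * k)" for k
  proof -
    have "\<bar>r powi (- k)\<bar> = r powi (- k)" using assms by (simp add: power_int_abs)
    moreover have "(r powi (- k))\<^sup>2 = r powi (-2 * k)" by (simp add: power_int_power' mult.commute)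
    ultimately show ?thesis by (simp add: to_l2_def power_mult_distrib mult.commute)
  qed
  then show "u \<in> l2rho r \<longleftrightarrow> square_summable (to_l2 r u)" "l2rho_norm r u = l2_norm (to_l2 r u)"
    by (simp_all add: l2rho_def l2rho_norm_def square_summable_def l2_norm_def)
qed

lemma l2rho_add:
  assumes "r > 0" "u \<in> l2rho r" "v \<in> l2rho r"
  shows "(\<lambda>k. u k + v k) \<in> l2rho r"
  using assms square_summable_add by (simp add: l2rho_iff_square_summable to_l2_add)

lemma l2rho_delta_m1: "r > 0 \<Longrightarrow> delta_m1 x \<in> l2rho r"
  by (simp add: l2rho_iff_square_summable)
     (rule square_summable_finite_support[of "{-1}"], auto simp: to_l2_def delta_m1_def)

lemma
  assumes "r > 0" "u \<in> l2rho r"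
  shows l2rho_chi_nonneg: "chi_nonneg u \<in> l2rho r"
    and l2rho_norm_chi_nonneg_le: "l2rho_norm r (chi_nonneg u) \<le> l2rho_norm r u"
  using assms square_summable_chi_nonneg l2_norm_chi_nonneg_le
  by (simp_all add: l2rho_iff_square_summable l2rho_norm_eq_l2_norm to_l2_chi_nonneg)

lemma chi_nonneg_diff:
  fixes u v :: "int \<Rightarrow> 'a::group_add"
  shows "chi_nonneg (\<lambda>k. u k - v k) = (\<lambda>k. chi_nonneg u k - chi_nonneg v k)"
  by (auto simp: chi_nonneg_def fun_eq_iff)

section \<open>Complex structures and the discrete Fourier transform\<close>

lemma cscale_add_left: "cscale J (z + w) x = cscale J z x + cscale J w x"
  by (simp add: cscale_def algebra_simps scaleR_add_left)

lemma cscale_sum_left: "cscale J (\<Sum>i\<in>S. f i) x = (\<Sum>i\<in>S. cscale J (f i) x)"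
proof -
  have "cscale J 0 x = 0" by (simp add: cscale_def)
  then show ?thesis by (induction S rule: infinite_finite_induct) (simp_all add: cscale_add_left)
qed

lemma cscale_of_real [simp]: "cscale J (of_real r) x = r *\<^sub>R x"
  by (simp add: cscale_def)

lemma bounded_clinear_op_cscale:
  assumes "bounded_clinear_op J B"
  shows "B (cscale J z x) = cscale J z (B x)"
proof -
  interpret B: bounded_linear B using assms unfolding bounded_clinear_op_def by auto
  show ?thesis using assms unfolding bounded_clinear_op_def by (simp add: cscale_def B.add B.scaleR)
qed

definition unity_root :: "nat \<Rightarrow> int \<Rightarrow> complex" where
  "unity_root N t = cis (2 * pi * of_int t / real N)"

lemma unity_root_add: "unity_root N (s + t) = unity_root N s * unity_root N t"
  by (simp add: unity_root_def cis_mult add_divide_distrib distrib_left)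

lemma cnj_unity_root: "cnj (unity_root N t) = unity_root N (- t)"
  by (simp add: unity_root_def cis_cnj)

lemma norm_unity_root [simp]: "cmod (unity_root N t) = 1"
  by (simp add: unity_root_def)

lemma unity_root_power: "unity_root N t ^ i = unity_root N (int i * t)"
  unfolding unity_root_def Complex.DeMoivre by (simp add: field_simps)

lemma unity_root_eq_1_iff:
  assumes "N > 0"
  shows "unity_root N t = 1 \<longleftrightarrow> int N dvd t"
proof
  assume "unity_root N t = 1"
  then have "cos (2 * pi * of_int t / real N) = 1"
    unfolding unity_root_def by (metis cis.sel(1) one_complex.sel(1))
  then obtain k :: int where "2 * pi * of_int t / real N = of_int k * 2 * pi"
    by (auto simp: cos_one_2pi_int)
  then have "real_of_int t = real_of_int (int N * k)" using assms by (simp add: field_simps)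
  then show "int N dvd t" by (metis dvd_triv_left of_int_eq_iff)
next
  assume "int N dvd t"
  then obtain k where "t = int N * k" by blast
  then have "2 * pi * of_int t / real N = 2 * pi * of_int k" using assms by simp
  then show "unity_root N t = 1" unfolding unity_root_def by (simp add: cis_multiple_2pi)
qed

lemma eq_if_dvd_diff_window:
  assumes "p \<in> {b..<b + int N}" "q \<in> {b..<b + int N}" "int N dvd (p - q)"
  shows "p = q"
  using assms dvd_imp_le_int[of "p - q" "int N"] by (cases "p = q") auto

lemma window_eq_image: "{a..<a + int N} = (\<lambda>i. a + int i) ` {..<N}"
proof (rule set_eqI, rule iffI)
  fix q assume "q \<in> {a..<a + int N}"
  then show "q \<in> (\<lambda>i. a + int i) ` {..<N}" by (intro image_eqI[of _ _ "nat (q - a)"]) auto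
qed auto

lemma sum_unity_root_window:
  assumes "N > 0"
  shows "(\<Sum>q\<in>{a..<a + int N}. unity_root N (q * m)) = (if int N dvd m then of_nat N else 0)"
proof -
  have "(\<Sum>q\<in>{a..<a + int N}. unity_root N (q * m)) = (\<Sum>i<N. unity_root N ((a + int i) * m))"
    unfolding window_eq_image by (subst sum.reindex) (auto simp: inj_on_def)
  also have "\<dots> = unity_root N (a * m) * (\<Sum>i<N. unity_root N m ^ i)"
    by (simp add: sum_distrib_left unity_root_power unity_root_add[symmetric] algebra_simps)
  also have "\<dots> = (if int N dvd m then of_nat N else 0)"
  proof (cases "int N dvd m")
    case True
    then have "unity_root N m = 1" "unity_root N (a * m) = 1"
      using assms by (simp_all add: unity_root_eq_1_iff)
    then show ?thesis using True by simp
  next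
    case False
    have "unity_root N m ^ N = 1" using assms by (simp add: unity_root_power unity_root_eq_1_iff)
    then have "(\<Sum>i<N. unity_root N m ^ i) = 0"
      using False assms by (simp add: geometric_sum unity_root_eq_1_iff)
    then show ?thesis using False by simp
  qed
  finally show ?thesis .
qed

locale complex_hilbert =
  fixes J :: "'h::real_inner \<Rightarrow> 'h"
  assumes complex_structure: "complex_structure J"
begin

lemma J_bounded_linear: "bounded_linear J"
  and J_J [simp]: "J (J x) = - x"
  and inner_J_J [simp]: "inner (J x) (J y) = inner x y"
  using complex_structure unfolding complex_structure_def by auto

sublocale J: bounded_linear J by (rule J_bounded_linear)

lemma inner_J_left: "inner (J x) y = - inner x (J y)"
  by (metis inner_J_J J_J inner_minus_left)

lemma bounded_linear_cscale: "bounded_linear (cscale J z)"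
  unfolding cscale_def[abs_def]
  by (intro bounded_linear_add bounded_linear_scaleR_right
        bounded_linear_compose[OF bounded_linear_scaleR_right J_bounded_linear])

sublocale cscale: bounded_linear "cscale J z" for z
  by (rule bounded_linear_cscale)

lemma cscale_mult: "cscale J (z * w) x = cscale J z (cscale J w x)"
  by (simp add: cscale_def J.add J.scaleR algebra_simps)

lemma inner_cscale:
  "inner (cscale J z x) (cscale J w y) = Re (z * cnj w) * inner x y - Im (z * cnj w) * inner x (J y)"
  using inner_J_left[of x y]
  by (simp add: cscale_def inner_add_left inner_add_right algebra_simps)

lemma norm_cscale: "norm (cscale J z x) = cmod z * norm x"
proof -
  have "(norm (cscale J z x))\<^sup>2 = Re (z * cnj z) * (norm x)\<^sup>2"
    using inner_J_left[of x x] by (simp add: inner_cscale power2_norm_eq_inner inner_commute)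
  also have "\<dots> = (cmod z * norm x)\<^sup>2"
    by (simp add: complex_mult_cnj cmod_def power_mult_distrib)
  finally show ?thesis by (simp add: power2_eq_iff_nonneg)
qed

text \<open>The exponent \<open>s\<close> covers both the transform (\<open>s = -1\<close>) and its inverse (\<open>s = 1\<close>).\<close>

lemma parseval_window:
  assumes N: "N > 0" and s: "coprime s (int N)"
  shows "(\<Sum>q\<in>{a..<a + int N}.
            (norm (\<Sum>p\<in>{b..<b + int N}. cscale J (unity_root N (s * (q * p))) (v p)))\<^sup>2)
          = real N * (\<Sum>p\<in>{b..<b + int N}. (norm (v p))\<^sup>2)"
proof -
  define P where "P = {b..<b + int N}"
  define Q where "Q = {a..<a + int N}"
  have orth: "int N dvd (s * (p - p')) \<longleftrightarrow> p = p'" if "p \<in> P" "p' \<in> P" for p p'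
    using eq_if_dvd_diff_window[OF that[unfolded P_def]] s
    by (auto simp: coprime_dvd_mult_right_iff coprime_commute)
  have "(\<Sum>q\<in>Q. (norm (\<Sum>p\<in>P. cscale J (unity_root N (s * (q * p))) (v p)))\<^sup>2)
      = (\<Sum>q\<in>Q. \<Sum>p\<in>P. \<Sum>p'\<in>P. Re (unity_root N (q * (s * (p - p')))) * inner (v p) (v p')
                 - Im (unity_root N (q * (s * (p - p')))) * inner (v p) (J (v p')))"
    by (simp add: power2_norm_eq_inner inner_sum_left inner_sum_right inner_cscale cnj_unity_root
        unity_root_add[symmetric] algebra_simps)
       (rule sum.cong[OF refl], rule sum.swap)
  also have "\<dots> = (\<Sum>p\<in>P. \<Sum>p'\<in>P. \<Sum>q\<in>Q. Re (unity_root N (q * (s * (p - p')))) * inner (v p) (v p')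
                 - Im (unity_root N (q * (s * (p - p')))) * inner (v p) (J (v p')))"
    by (subst sum.swap, rule sum.cong, rule refl, subst sum.swap, rule refl)
  also have "\<dots> = (\<Sum>p\<in>P. \<Sum>p'\<in>P. Re (\<Sum>q\<in>Q. unity_root N (q * (s * (p - p')))) * inner (v p) (v p')
                 - Im (\<Sum>q\<in>Q. unity_root N (q * (s * (p - p')))) * inner (v p) (J (v p')))"
    by (simp add: sum_subtractf Re_sum Im_sum sum_distrib_right)
  also have "\<dots> = (\<Sum>p\<in>P. \<Sum>p'\<in>P. if p' = p then real N * inner (v p) (v p) else 0)"
    unfolding Q_def by (intro sum.cong refl) (auto simp: sum_unity_root_window[OF N] orth)
  also have "\<dots> = real N * (\<Sum>p\<in>P. (norm (v p))\<^sup>2)"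
    by (simp add: P_def sum_distrib_left power2_norm_eq_inner)
  finally show ?thesis unfolding P_def Q_def .
qed

definition dft :: "nat \<Rightarrow> int \<Rightarrow> (int \<Rightarrow> 'h) \<Rightarrow> int \<Rightarrow> 'h" where
  "dft N b v j = (\<Sum>k\<in>{b..<b + int N}. cscale J (unity_root N (- (j * k))) (v k))"

definition idft :: "nat \<Rightarrow> (int \<Rightarrow> 'h) \<Rightarrow> int \<Rightarrow> 'h" where
  "idft N X m = (1 / real N) *\<^sub>R (\<Sum>j\<in>{0..<int N}. cscale J (unity_root N (m * j)) (X j))"

lemma sum_norm_dft:
  assumes "N > 0"
  shows "(\<Sum>j\<in>{0..<int N}. (norm (dft N b v j))\<^sup>2)
    = real N * (\<Sum>k\<in>{b..<b + int N}. (norm (v k))\<^sup>2)"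
  using parseval_window[OF assms, where s = "-1" and a = 0 and b = b and v = v]
  by (simp add: dft_def)

lemma sum_norm_idft:
  assumes "N > 0"
  shows "(\<Sum>m\<in>{b..<b + int N}. (norm (idft N X m))\<^sup>2)
    = (\<Sum>j\<in>{0..<int N}. (norm (X j))\<^sup>2) / real N"
proof -
  have "(\<Sum>m\<in>{b..<b + int N}. (norm (idft N X m))\<^sup>2)
      = (\<Sum>m\<in>{b..<b + int N}.
          (norm (\<Sum>j\<in>{0..<int N}. cscale J (unity_root N (m * j)) (X j)))\<^sup>2) / (real N)\<^sup>2"
    by (simp add: idft_def power_mult_distrib power_divide sum_divide_distrib)
  then show ?thesis
    using parseval_window[OF assms, where s = 1 and a = b and b = 0 and v = X] assms
    by (simp add: power2_eq_square)
qed

lemma idft_dft: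
  assumes "N > 0" "m \<in> {b..<b + int N}"
  shows "idft N (dft N b v) m = v m"
proof -
  have orth: "int N dvd (m - k) \<longleftrightarrow> k = m" if "k \<in> {b..<b + int N}" for k
    using eq_if_dvd_diff_window[OF assms(2) that] by auto
  have "(\<Sum>j\<in>{0..<int N}. cscale J (unity_root N (m * j)) (dft N b v j))
      = (\<Sum>k\<in>{b..<b + int N}. cscale J (\<Sum>j\<in>{0..<int N}. unity_root N (j * (m - k))) (v k))"
    unfolding dft_def cscale.sum
    by (subst sum.swap) (simp add: cscale.sum cscale_sum_left cscale_mult[symmetric]
        unity_root_add[symmetric] algebra_simps)
  also have "\<dots> = (\<Sum>k\<in>{b..<b + int N}. if k = m then real N *\<^sub>R v k else 0)"
  proof (intro sum.cong refl)
    fix k assume "k \<in> {b..<b + int N}"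
    moreover have "(\<Sum>j\<in>{0..<0 + int N}. unity_root N (j * (m - k)))
        = (if int N dvd (m - k) then of_nat N else 0)"
      by (rule sum_unity_root_window[OF assms(1)])
    ultimately have "(\<Sum>j\<in>{0..<int N}. unity_root N (j * (m - k)))
        = (if k = m then of_nat N else 0)"
      using orth by simp
    then show "cscale J (\<Sum>j\<in>{0..<int N}. unity_root N (j * (m - k))) (v k)
        = (if k = m then real N *\<^sub>R v k else 0)"
      by (simp add: cscale_def)
  qed
  finally show ?thesis using assms by (simp add: idft_def)
qed

lemma dft_shift:
  assumes "v b = 0" "v (b + int N) = 0"
  shows "dft N b (\<lambda>k. v (k + 1)) j = cscale J (unity_root N j) (dft N b v j)"
proof -
  define f where "f k = cscale J (unity_root N (- (j * k))) (v k)" for k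
  have "dft N b (\<lambda>k. v (k + 1)) j = cscale J (unity_root N j) (\<Sum>k\<in>{b..<b + int N}. f (k + 1))"
    unfolding dft_def f_def cscale.sum
    by (intro sum.cong refl)
       (simp add: cscale_mult[symmetric] unity_root_add[symmetric] algebra_simps)
  also have "(\<Sum>k\<in>{b..<b + int N}. f (k + 1)) = (\<Sum>k\<in>{b..<b + int N}. f k)"
  proof -
    have "(\<Sum>k\<in>{b..<b + int N}. f (k + 1)) = (\<Sum>k\<in>{b<..b + int N}. f k)"
      by (rule sum.reindex_bij_witness[of _ "\<lambda>k. k - 1" "\<lambda>k. k + 1"]) auto
    also have "\<dots> = (\<Sum>k\<in>{b..<b + int N}. f k)"
      using assms by (intro sum.mono_neutral_cong) (auto simp: f_def)
    finally show ?thesis .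
  qed
  finally show ?thesis by (simp add: dft_def f_def)
qed

end

section \<open>Resolvent estimates\<close>

lemma resolvent_not_in_spectrum:
  assumes "z \<notin> spectrum J A"
  shows "bounded_clinear_op J (resolvent J A z)"
    and "resolvent J A z (shifted_op J A z x) = x"
    and "shifted_op J A z (resolvent J A z y) = y"
proof -
  obtain B where B: "bounded_clinear_op J B"
    "B \<circ> shifted_op J A z = id" "shifted_op J A z \<circ> B = id"
    using assms unfolding spectrum_def by blast
  have R: "resolvent J A z = B" unfolding resolvent_def by (rule inv_unique_comp) (use B in auto)
  show "bounded_clinear_op J (resolvent J A z)" "resolvent J A z (shifted_op J A z x) = x"
    "shifted_op J A z (resolvent J A z y) = y"
    unfolding R using B by (simp_all add: fun_eq_iff)
qed

lemma bounded_linear_resolvent: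
  "z \<notin> spectrum J A \<Longrightarrow> bounded_linear (resolvent J A z)"
  using resolvent_not_in_spectrum(1) unfolding bounded_clinear_op_def by blast

context complex_hilbert
begin

lemma onorm_resolvent_le_nearby:
  assumes "z0 \<notin> spectrum J A" "z \<notin> spectrum J A"
    and close: "cmod (z - z0) < 1 / (2 * (onorm (resolvent J A z0) + 1))"
  shows "onorm (resolvent J A z) \<le> 2 * (onorm (resolvent J A z0) + 1)"
proof -
  define c where "c = onorm (resolvent J A z0) + 1"
  have c: "c > 0"
    using onorm_pos_le[OF bounded_linear_resolvent[OF assms(1)]] by (simp add: c_def)
  have lower_bound: "norm x \<le> 2 * c * norm (shifted_op J A z x)" for x
  proof -
    have "norm x = norm (resolvent J A z0 (shifted_op J A z0 x))"
      using resolvent_not_in_spectrum(2)[OF assms(1)] by simp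
    also have "\<dots> \<le> onorm (resolvent J A z0) * norm (shifted_op J A z0 x)"
      by (rule onorm[OF bounded_linear_resolvent[OF assms(1)]])
    also have "\<dots> \<le> c * norm (shifted_op J A z0 x)" by (simp add: c_def mult_right_mono)
    finally have near_z0: "norm x \<le> c * norm (shifted_op J A z0 x)" .
    have "shifted_op J A z0 x = shifted_op J A z x - cscale J (z - z0) x"
      unfolding shifted_op_def using cscale_add_left[of J z0 "z - z0" x] by simp
    then have "norm (shifted_op J A z0 x)
        \<le> norm (shifted_op J A z x) + norm (cscale J (z - z0) x)"
      by (simp add: norm_triangle_ineq4)
    also have "norm (cscale J (z - z0) x) = cmod (z - z0) * norm x"
      by (rule norm_cscale)
    also have "cmod (z - z0) * norm x \<le> norm x / (2 * c)"
      using close mult_right_mono[of "cmod (z - z0)" "1 / (2 * c)" "norm x"] by (simp add: c_def)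
    finally show ?thesis using near_z0 c by (simp add: field_simps)
  qed
  show ?thesis
  proof (rule onorm_bound)
    fix y
    show "norm (resolvent J A z y) \<le> 2 * (onorm (resolvent J A z0) + 1) * norm y"
      using lower_bound[of "resolvent J A z y"] resolvent_not_in_spectrum(3)[OF assms(2)]
      by (simp add: c_def)
  qed (use c in \<open>simp add: c_def\<close>)
qed

lemma bdd_above_onorm_resolvent:
  assumes "compact K" "K \<inter> spectrum J A = {}"
  shows "bdd_above ((\<lambda>z. onorm (resolvent J A z)) ` K)"
proof -
  define R where "R z0 = 2 * (onorm (resolvent J A z0) + 1)" for z0
  have R: "R z0 > 0" if "z0 \<in> K" for z0
    using assms(2) that onorm_pos_le[OF bounded_linear_resolvent] by (fastforce simp: R_def)
  obtain D where D: "D \<subseteq> K" "finite D" "K \<subseteq> (\<Union>d\<in>D. ball d (1 / R d))"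
  proof (rule compactE_image[OF assms(1), of K "\<lambda>z0. ball z0 (1 / R z0)"])
    show "K \<subseteq> (\<Union>z0\<in>K. ball z0 (1 / R z0))" using R by force
  qed auto
  show ?thesis
  proof (rule bdd_aboveI2)
    fix z assume z: "z \<in> K"
    then obtain d where d: "d \<in> D" "cmod (z - d) < 1 / R d"
      using D(3) by (auto simp: dist_norm norm_minus_commute)
    then have "onorm (resolvent J A z) \<le> R d"
      using onorm_resolvent_le_nearby[of d A z] assms(2) z D(1) by (auto simp: R_def)
    also have "\<dots> \<le> (\<Sum>d'\<in>D. R d')"
      using D R d(1) by (intro member_le_sum) (auto intro: less_imp_le)
    finally show "onorm (resolvent J A z) \<le> (\<Sum>d'\<in>D. R d')" .
  qed
qed

end

section \<open>Invertibility of \<open>\<rho>\<tau> - A\<close>\<close>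

lemma trapezoid_cutoff:
  assumes "L > 0"
  obtains \<phi> :: "int \<Rightarrow> real"
  where "\<And>m. a \<le> m \<Longrightarrow> m < a + int n \<Longrightarrow> \<phi> m = 1"
    and "\<And>m. \<phi> m \<noteq> 0 \<Longrightarrow> a - int L < m \<and> m < a + int n - 1 + int L"
    and "\<And>m. \<bar>\<phi> (m + 1) - \<phi> m\<bar> \<le> 1 / real L"
proof
  define \<phi> where "\<phi> m = max 0 (min 1 (min (real_of_int (m - (a - int L)) / real L)
                         (real_of_int (a + int n - 1 + int L - m) / real L)))" for m
  show "\<phi> m = 1" if "a \<le> m" "m < a + int n" for m
    using that assms by (simp add: \<phi>_def le_divide_eq)
  show "a - int L < m \<and> m < a + int n - 1 + int L" if "\<phi> m \<noteq> 0" for m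
  proof (rule ccontr)
    assume "\<not> (a - int L < m \<and> m < a + int n - 1 + int L)"
    then have "real_of_int (m - (a - int L)) / real L \<le> 0
        \<or> real_of_int (a + int n - 1 + int L - m) / real L \<le> 0"
      using assms by (auto simp: divide_le_0_iff)
    then have "\<phi> m = 0" by (auto simp: \<phi>_def)
    with that show False by simp
  qed
  have clip_lipschitz: "\<bar>max 0 (min 1 (min x y)) - max 0 (min 1 (min x' y'))\<bar> \<le> d"
    if "\<bar>x - x'\<bar> \<le> d" "\<bar>y - y'\<bar> \<le> d" for x y x' y' d :: real
    using that by (simp add: max_def min_def abs_le_iff)
  show "\<bar>\<phi> (m + 1) - \<phi> m\<bar> \<le> 1 / real L" for m
    unfolding \<phi>_def by (rule clip_lipschitz) (simp_all add: diff_divide_distrib[symmetric])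
qed

lemma Cauchy_if_dist_le_add:
  fixes X :: "nat \<Rightarrow> 'a::metric_space"
  assumes "\<And>m n. dist (X m) (X n) \<le> d m + d n" "d \<longlonglongrightarrow> 0"
  shows "Cauchy X"
proof (rule metric_CauchyI)
  fix e :: real assume "e > 0"
  then obtain N where N: "\<And>n. n \<ge> N \<Longrightarrow> norm (d n - 0) < e / 2"
    using LIMSEQ_D[OF assms(2), of "e / 2"] by auto
  have "dist (X m) (X n) < e" if "m \<ge> N" "n \<ge> N" for m n
    using assms(1)[of m n] N[OF that(1)] N[OF that(2)] by simp
  then show "\<exists>N. \<forall>m\<ge>N. \<forall>n\<ge>N. dist (X m) (X n) < e" by blast
qed

lemma mult_max_zero_less_one:
  fixes M L :: real
  assumes "M \<ge> 0" "L < 1 / M"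
  shows "M * max L 0 < 1"
proof (cases "M > 0 \<and> L > 0")
  case True
  then show ?thesis using assms(2) by (simp add: field_simps)
next
  case False
  then have "M = 0 \<or> max L 0 = 0" using assms(1) by (auto simp: max_def)
  then show ?thesis by auto
qed

locale circle_resolvent_bound = complex_hilbert J
  for J :: "'h::{real_inner, complete_space} \<Rightarrow> 'h" +
  fixes A :: "'h \<Rightarrow> 'h" and \<rho> :: real and M :: real
  assumes A_clinear: "bounded_clinear_op J A"
    and rho_pos: "\<rho> > 0"
    and circle_resolvent_set: "spectrum J A \<inter> sphere 0 \<rho> = {}"
    and onorm_resolvent_le: "z \<in> sphere 0 \<rho> \<Longrightarrow> onorm (resolvent J A z) \<le> M"
begin

abbreviation T :: "(int \<Rightarrow> 'h) \<Rightarrow> int \<Rightarrow> 'h" where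
  "T \<equiv> scaled_tau_minus_A \<rho> A"

sublocale A: bounded_linear A
  using A_clinear by (simp add: bounded_clinear_op_def)

lemma not_in_spectrum_circle: "z \<in> sphere 0 \<rho> \<Longrightarrow> z \<notin> spectrum J A"
  using circle_resolvent_set by blast

lemma unity_root_circle: "complex_of_real \<rho> * unity_root N j \<in> sphere 0 \<rho>"
  using rho_pos by (simp add: norm_mult)

lemma norm_resolvent_le:
  assumes "z \<in> sphere 0 \<rho>"
  shows "norm (resolvent J A z y) \<le> M * norm y"
proof -
  have "norm (resolvent J A z y) \<le> onorm (resolvent J A z) * norm y"
    by (rule onorm[OF bounded_linear_resolvent[OF not_in_spectrum_circle[OF assms]]])
  also have "\<dots> \<le> M * norm y" using onorm_resolvent_le[OF assms] by (simp add: mult_right_mono)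
  finally show ?thesis .
qed

lemma norm_le_shifted_op: "z \<in> sphere 0 \<rho> \<Longrightarrow> norm x \<le> M * norm (shifted_op J A z x)"
  using norm_resolvent_le[of z "shifted_op J A z x"]
  by (simp add: resolvent_not_in_spectrum(2) not_in_spectrum_circle)

lemma M_nonneg: "M \<ge> 0"
  using onorm_resolvent_le[OF unity_root_circle]
    onorm_pos_le[OF bounded_linear_resolvent[OF not_in_spectrum_circle[OF unity_root_circle]]]
  by (meson order_trans)

lemma dft_T:
  assumes "\<And>k. k \<notin> {b + 1..<b + int N} \<Longrightarrow> v k = 0"
  shows "dft N b (T v) j = shifted_op J A (complex_of_real \<rho> * unity_root N j) (dft N b v j)"
proof -
  have "dft N b (T v) j
      = (\<Sum>k\<in>{b..<b + int N}. \<rho> *\<^sub>R cscale J (unity_root N (- (j * k))) (v (k + 1)))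
        - (\<Sum>k\<in>{b..<b + int N}. A (cscale J (unity_root N (- (j * k))) (v k)))"
    unfolding dft_def scaled_tau_minus_A_def
    by (simp add: cscale.diff cscale.scaleR sum_subtractf bounded_clinear_op_cscale[OF A_clinear])
  also have "\<dots> = \<rho> *\<^sub>R dft N b (\<lambda>k. v (k + 1)) j - A (dft N b v j)"
    by (simp add: dft_def scaleR_sum_right A.sum)
  also have "dft N b (\<lambda>k. v (k + 1)) j = cscale J (unity_root N j) (dft N b v j)"
    using assms by (intro dft_shift) auto
  finally show ?thesis by (simp add: shifted_op_def cscale_mult)
qed

lemma T_idft:
  "T (idft N X) m = idft N (\<lambda>j. shifted_op J A (complex_of_real \<rho> * unity_root N j) (X j)) m"
proof -
  define z where "z j = complex_of_real \<rho> * unity_root N j" for j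
  have shift: "\<rho> *\<^sub>R cscale J (unity_root N ((m + 1) * j)) x
      = cscale J (unity_root N (m * j)) (cscale J (z j) x)" for j x
  proof -
    have "complex_of_real \<rho> * unity_root N ((m + 1) * j) = unity_root N (m * j) * z j"
      by (simp add: z_def unity_root_add[symmetric] algebra_simps)
    then show ?thesis by (metis cscale_mult cscale_of_real)
  qed
  have "\<rho> *\<^sub>R idft N X (m + 1)
      = (1 / real N) *\<^sub>R (\<Sum>j\<in>{0..<int N}. \<rho> *\<^sub>R cscale J (unity_root N ((m + 1) * j)) (X j))"
    unfolding idft_def by (simp add: scaleR_sum_right)
  also have "\<dots> = (1 / real N) *\<^sub>R
      (\<Sum>j\<in>{0..<int N}. cscale J (unity_root N (m * j)) (cscale J (z j) (X j)))"
    by (simp only: shift)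
  finally have "T (idft N X) m = (1 / real N) *\<^sub>R
      ((\<Sum>j\<in>{0..<int N}. cscale J (unity_root N (m * j)) (cscale J (z j) (X j)))
        - (\<Sum>j\<in>{0..<int N}. cscale J (unity_root N (m * j)) (A (X j))))"
    by (simp add: scaled_tau_minus_A_def idft_def A.scaleR A.sum scaleR_diff_right
        bounded_clinear_op_cscale[OF A_clinear])
  then show ?thesis
    by (simp add: idft_def z_def shifted_op_def cscale.diff sum_subtractf)
qed

lemma
  assumes "square_summable v"
  shows square_summable_T: "square_summable (T v)"
    and l2_norm_T_le: "l2_norm (T v) \<le> (\<rho> + onorm A) * l2_norm v"
  using rho_pos assms
  by (simp_all add: square_summable_scaled_tau_minus_A l2_norm_scaled_tau_minus_A_le
      A.bounded_linear_axioms)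

lemma l2_norm_le_l2_norm_T_window:
  assumes N: "N > 0" and supp: "\<And>k. k \<notin> {b + 1..<b + int N} \<Longrightarrow> v k = 0"
  shows "l2_norm v \<le> M * l2_norm (T v)"
proof -
  define W where "W = {b..<b + int N}"
  have v0: "v k = 0" if "k \<notin> W" for k using supp that by (auto simp: W_def)
  have Tv0: "T v k = 0" if "k \<notin> W" for k
    using supp[of k] supp[of "k + 1"] that by (auto simp: W_def scaled_tau_minus_A_def A.zero)
  \<comment> \<open>\<open>W\<close> contains the supports of \<open>v\<close> and \<open>T v\<close>, so Parseval applies to both\<close>
  have "real N * (\<Sum>k\<in>W. (norm (v k))\<^sup>2) = (\<Sum>j\<in>{0..<int N}. (norm (dft N b v j))\<^sup>2)"
    unfolding W_def by (rule sum_norm_dft[OF N, symmetric])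
  also have "\<dots> \<le> (\<Sum>j\<in>{0..<int N}. (M * norm (dft N b (T v) j))\<^sup>2)"
  proof (intro sum_mono power_mono)
    fix j
    have "dft N b (T v) j = shifted_op J A (complex_of_real \<rho> * unity_root N j) (dft N b v j)"
      by (rule dft_T) (use supp in blast)
    then show "norm (dft N b v j) \<le> M * norm (dft N b (T v) j)"
      by (simp add: norm_le_shifted_op[OF unity_root_circle])
  qed simp
  also have "\<dots> = real N * (M\<^sup>2 * (\<Sum>k\<in>W. (norm (T v k))\<^sup>2))"
    using sum_norm_dft[OF N, of b "T v"]
    by (simp add: W_def power_mult_distrib sum_distrib_left[symmetric])
  finally have "(\<Sum>k\<in>W. (norm (v k))\<^sup>2) \<le> M\<^sup>2 * (\<Sum>k\<in>W. (norm (T v k))\<^sup>2)"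
    using N by simp
  then have "L2_set (\<lambda>k. norm (v k)) W \<le> M * L2_set (\<lambda>k. norm (T v k)) W"
    unfolding L2_set_def using M_nonneg
    by (metis real_sqrt_le_mono real_sqrt_mult real_sqrt_abs abs_of_nonneg)
  then show ?thesis
    using l2_norm_finite_support[of W v] l2_norm_finite_support[of W "T v"] v0 Tv0
    by (simp add: W_def)
qed

lemma l2_norm_le_l2_norm_T_finite:
  assumes "finite {k. v k \<noteq> 0}"
  shows "l2_norm v \<le> M * l2_norm (T v)"
proof -
  obtain K :: nat where "{k. v k \<noteq> 0} \<subseteq> {- int K..int K}"
    using finite_subset_int_interval[OF assms] by blast
  then show ?thesis
    by (intro l2_norm_le_l2_norm_T_window[where N = "2 * K + 2" and b = "- int K - 1"]) auto
qed

lemma l2_norm_le_l2_norm_T: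
  assumes v: "square_summable v"
  shows "l2_norm v \<le> M * l2_norm (T v)"
proof (rule field_le_epsilon)
  fix e :: real assume e: "e > 0"
  define C where "C = 1 + M * (\<rho> + onorm A)"
  have C: "C > 0" unfolding C_def
    using M_nonneg rho_pos onorm_pos_le[OF A.bounded_linear_axioms]
    by (intro add_pos_nonneg mult_nonneg_nonneg) auto
  obtain K where K: "l2_norm (\<lambda>k. v k - truncate K v k) \<le> e / C"
    using l2_norm_diff_truncate_le[OF v] e C by (meson divide_pos_pos)
  define r where "r = (\<lambda>k. v k - truncate K v k)"
  have vK: "square_summable (truncate K v)" "finite {k. truncate K v k \<noteq> 0}"
    using finite_truncate_nonzero by (auto intro: square_summable_finite_support)
  have r: "square_summable r" unfolding r_def by (rule square_summable_diff[OF v vK(1)])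
  have "l2_norm v \<le> l2_norm (truncate K v) + l2_norm r"
    using l2_norm_add_le[OF vK(1) r] by (simp add: r_def)
  also have "l2_norm (truncate K v) \<le> M * l2_norm (T (truncate K v))"
    by (rule l2_norm_le_l2_norm_T_finite[OF vK(2)])
  also have "\<dots> \<le> M * (l2_norm (T v) + (\<rho> + onorm A) * l2_norm r)"
  proof (rule mult_left_mono[OF _ M_nonneg])
    have "T (truncate K v) = (\<lambda>k. T v k - T r k)"
      unfolding r_def by (simp add: scaled_tau_minus_A_diff[OF A.linear_axioms])
    then show "l2_norm (T (truncate K v)) \<le> l2_norm (T v) + (\<rho> + onorm A) * l2_norm r"
      using l2_norm_diff_le[OF square_summable_T[OF v] square_summable_T[OF r]] l2_norm_T_le[OF r]
      by simp
  qed
  also have "M * (l2_norm (T v) + (\<rho> + onorm A) * l2_norm r) + l2_norm r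
      = M * l2_norm (T v) + C * l2_norm r"
    by (simp add: C_def algebra_simps)
  also have "C * l2_norm r \<le> e" using K C by (simp add: r_def field_simps)
  finally show "l2_norm v \<le> M * l2_norm (T v) + e" by simp
qed

lemma solution_on_window:
  assumes N: "N > 0"
  obtains p where "\<And>m. m \<in> {b..<b + int N} \<Longrightarrow> T p m = u m"
    and "L2_set (\<lambda>m. norm (p m)) {b..<b + int N} \<le> M * L2_set (\<lambda>k. norm (u k)) {b..<b + int N}"
proof
  define W where "W = {b..<b + int N}"
  \<comment> \<open>invert the Fourier multipliers of \<open>T\<close>; the resulting \<open>p\<close> is \<open>N\<close>-periodic\<close>
  define X where "X j = resolvent J A (complex_of_real \<rho> * unity_root N j) (dft N b u j)" for j
  show "T (idft N X) m = u m" if "m \<in> {b..<b + int N}" for m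
    using that
    by (simp add: T_idft X_def resolvent_not_in_spectrum(3)
        not_in_spectrum_circle[OF unity_root_circle] idft_dft[OF N])
  have "(\<Sum>m\<in>W. (norm (idft N X m))\<^sup>2) = (\<Sum>j\<in>{0..<int N}. (norm (X j))\<^sup>2) / real N"
    unfolding W_def by (rule sum_norm_idft[OF N])
  also have "\<dots> \<le> (\<Sum>j\<in>{0..<int N}. (M * norm (dft N b u j))\<^sup>2) / real N"
    by (intro divide_right_mono sum_mono power_mono)
       (simp_all add: X_def norm_resolvent_le[OF unity_root_circle])
  also have "\<dots> = M\<^sup>2 * (\<Sum>k\<in>W. (norm (u k))\<^sup>2)"
    using sum_norm_dft[OF N, of b u] N
    by (simp add: W_def power_mult_distrib sum_distrib_left[symmetric])
  finally show "L2_set (\<lambda>m. norm (idft N X m)) W \<le> M * L2_set (\<lambda>k. norm (u k)) W"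
    unfolding L2_set_def using M_nonneg
    by (metis real_sqrt_le_mono real_sqrt_mult real_sqrt_abs abs_of_nonneg)
qed

lemma cutoff_window_solution:
  fixes L n :: nat and a :: int
  defines "W \<equiv> {a - int L..<a - int L + int (n + 2 * L)}"
  assumes L: "L > 0" and supp: "\<And>k. u k \<noteq> 0 \<Longrightarrow> k \<in> {a..<a + int n}"
    and p: "\<And>m. m \<in> W \<Longrightarrow> T p m = u m"
  obtains w where "\<And>m. m \<notin> W \<Longrightarrow> w m = 0"
    and "l2_norm (\<lambda>k. T w k - u k) \<le> \<rho> / real L * L2_set (\<lambda>m. norm (p m)) W"
proof -
  obtain \<phi> where \<phi>1: "\<And>m. a \<le> m \<Longrightarrow> m < a + int n \<Longrightarrow> \<phi> m = 1"
    and \<phi>0: "\<And>m. \<phi> m \<noteq> 0 \<Longrightarrow> a - int L < m \<and> m < a + int n - 1 + int L"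
    and \<phi>_lip: "\<And>m. \<bar>\<phi> (m + 1) - \<phi> m\<bar> \<le> 1 / real L"
    using trapezoid_cutoff[OF L] by blast
  define w where "w = (\<lambda>m. \<phi> m *\<^sub>R p m)"
  define S where "S = {a - int L - 1..<a - int L - 1 + int (n + 2 * L)}"
  have w0: "w m = 0" if "m \<notin> W" for m
    using \<phi>0[of m] that by (force simp: w_def W_def)
  have "\<phi> m *\<^sub>R T p m = u m" for m
  proof (cases "u m = 0")
    case True
    then show ?thesis using \<phi>0[of m] p[of m] by (cases "\<phi> m = 0") (auto simp: W_def)
  next
    case False
    then show ?thesis using supp \<phi>1 p[of m] by (force simp: W_def)
  qed
  \<comment> \<open>by the discrete Leibniz rule only the slope of \<open>\<phi>\<close> enters the residual\<close>
  then have err: "T w m - u m = (\<rho> * (\<phi> (m + 1) - \<phi> m)) *\<^sub>R p (m + 1)" for m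
    using scaled_tau_minus_A_mult[OF A.linear_axioms, of \<rho> \<phi> p m] by (simp add: w_def)
  have err0: "T w m - u m = 0" if "m \<notin> S" for m
    using \<phi>0[of m] \<phi>0[of "m + 1"] that by (force simp: err S_def)
  have "l2_norm (\<lambda>k. T w k - u k) = L2_set (\<lambda>m. norm (T w m - u m)) S"
    by (rule l2_norm_finite_support) (auto simp: S_def err0)
  also have "\<dots> \<le> L2_set (\<lambda>m. \<rho> / real L * norm (p (m + 1))) S"
  proof (rule L2_set_mono)
    fix m
    have "norm (T w m - u m) = \<rho> * \<bar>\<phi> (m + 1) - \<phi> m\<bar> * norm (p (m + 1))"
      using rho_pos by (simp add: err abs_mult)
    also have "\<dots> \<le> \<rho> * (1 / real L) * norm (p (m + 1))"
      using rho_pos \<phi>_lip[of m] by (intro mult_right_mono mult_left_mono) auto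
    finally show "norm (T w m - u m) \<le> \<rho> / real L * norm (p (m + 1))" by simp
  qed simp
  also have "\<dots> = \<rho> / real L * L2_set (\<lambda>m. norm (p (m + 1))) S"
    using rho_pos by (intro L2_set_right_distrib[symmetric]) simp
  also have "L2_set (\<lambda>m. norm (p (m + 1))) S = L2_set (\<lambda>m. norm (p m)) W"
    unfolding L2_set_def W_def S_def
    by (rule arg_cong[where f = sqrt], rule sum.reindex_bij_witness[of _ "\<lambda>m. m - 1" "\<lambda>m. m + 1"])
       auto
  finally show ?thesis using w0 that by blast
qed

lemma approximate_solution_finite_support:
  assumes u: "finite {k. u k \<noteq> 0}" and e: "e > 0"
  obtains w where "square_summable w" "l2_norm (\<lambda>k. T w k - u k) \<le> e"
proof -
  obtain K :: nat where K: "{k. u k \<noteq> 0} \<subseteq> {- int K..int K}"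
    using finite_subset_int_interval[OF u] by blast
  obtain l :: nat where l: "\<rho> * M * l2_norm u / e < real l" using reals_Archimedean2 by blast
  define L where "L = Suc l"
  have L: "L > 0" "\<rho> * M * l2_norm u \<le> e * real L"
    using l e by (simp_all add: L_def pos_divide_less_eq algebra_simps)
  define n where "n = 2 * K + 1"
  define W where "W = {- int K - int L..<- int K - int L + int (n + 2 * L)}"
  have supp: "u k \<noteq> 0 \<Longrightarrow> k \<in> {- int K..<- int K + int n}" for k using K by (auto simp: n_def)
  have W_ne: "n + 2 * L > 0" by (simp add: n_def)
  obtain p where p: "\<And>m. m \<in> W \<Longrightarrow> T p m = u m"
    and p_bound: "L2_set (\<lambda>m. norm (p m)) W \<le> M * L2_set (\<lambda>k. norm (u k)) W"
    using solution_on_window[OF W_ne, of "- int K - int L" u] unfolding W_def by blast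
  obtain w where w0: "\<And>m. m \<notin> W \<Longrightarrow> w m = 0"
    and w: "l2_norm (\<lambda>k. T w k - u k) \<le> \<rho> / real L * L2_set (\<lambda>m. norm (p m)) W"
    using cutoff_window_solution[OF L(1) supp p] unfolding W_def by (auto simp: algebra_simps)
  have "L2_set (\<lambda>k. norm (u k)) W = l2_norm u"
    using K by (intro l2_norm_finite_support[symmetric]) (auto simp: W_def n_def)
  then have "\<rho> / real L * L2_set (\<lambda>m. norm (p m)) W \<le> \<rho> / real L * (M * l2_norm u)"
    using p_bound rho_pos by (intro mult_left_mono) auto
  also have "\<dots> \<le> e" using L by (simp add: pos_divide_le_eq mult_ac)
  finally show ?thesis
    using that square_summable_finite_support[of W w] w0 w by (auto simp: W_def)
qed

lemma approximate_solution:
  assumes u: "square_summable u" and e: "e > 0"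
  obtains w where "square_summable w" "l2_norm (\<lambda>k. T w k - u k) \<le> e"
proof -
  obtain K where K: "l2_norm (\<lambda>k. u k - truncate K u k) \<le> e / 2"
    using l2_norm_diff_truncate_le[OF u, of "e / 2"] e by auto
  obtain w where w: "square_summable w" "l2_norm (\<lambda>k. T w k - truncate K u k) \<le> e / 2"
    using approximate_solution_finite_support[OF finite_truncate_nonzero[of K u], of "e / 2"] e
    by auto
  have uK: "square_summable (truncate K u)"
    using finite_truncate_nonzero by (auto intro: square_summable_finite_support)
  have "l2_norm (\<lambda>k. T w k - u k)
      \<le> l2_norm (\<lambda>k. T w k - truncate K u k) + l2_norm (\<lambda>k. truncate K u k - u k)"
    using l2_norm_add_le[OF square_summable_diff[OF square_summable_T[OF w(1)] uK]
        square_summable_diff[OF uK u]] by simp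
  also have "\<dots> \<le> e" using K w(2) l2_norm_minus_commute[of u "truncate K u"] by simp
  finally show ?thesis using w(1) that by blast
qed

lemma l2_norm_diff_le_residuals:
  assumes u: "square_summable u" and "square_summable v" "square_summable w"
  shows "l2_norm (\<lambda>k. v k - w k)
    \<le> M * (l2_norm (\<lambda>k. T v k - u k) + l2_norm (\<lambda>k. T w k - u k))"
proof -
  have "l2_norm (\<lambda>k. v k - w k) \<le> M * l2_norm (T (\<lambda>k. v k - w k))"
    by (rule l2_norm_le_l2_norm_T[OF square_summable_diff[OF assms(2,3)]])
  also have "T (\<lambda>k. v k - w k) = (\<lambda>k. (T v k - u k) - (T w k - u k))"
    by (simp add: scaled_tau_minus_A_diff[OF A.linear_axioms])
  also have "M * l2_norm \<dots> \<le> M * (l2_norm (\<lambda>k. T v k - u k) + l2_norm (\<lambda>k. T w k - u k))"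
    using square_summable_diff[OF square_summable_T u] assms M_nonneg
    by (intro mult_left_mono l2_norm_diff_le) auto
  finally show ?thesis .
qed

lemma limit_of_approximate_solutions:
  assumes u: "square_summable u" and W: "\<And>n. square_summable (W n)"
    and W_err: "\<And>n. l2_norm (\<lambda>k. T (W n) k - u k) \<le> inverse (real (Suc n))"
  obtains w where "\<And>k. (\<lambda>n. W n k) \<longlonglongrightarrow> w k" "square_summable w"
proof -
  define R where "R n = (\<lambda>k. T (W n) k - u k)" for n
  have R: "square_summable (R n)" for n
    unfolding R_def by (rule square_summable_diff[OF square_summable_T[OF W] u])
  have dist_W: "dist (W m k) (W n k) \<le> M * inverse (real (Suc m)) + M * inverse (real (Suc n))"
    for m n k
  proof -
    have "dist (W m k) (W n k) \<le> l2_norm (\<lambda>k. W m k - W n k)"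
      using norm_le_l2_norm[OF square_summable_diff[OF W W]] by (simp add: dist_norm)
    also have "\<dots> \<le> M * (l2_norm (\<lambda>k. T (W m) k - u k) + l2_norm (\<lambda>k. T (W n) k - u k))"
      by (rule l2_norm_diff_le_residuals[OF u W W])
    also have "\<dots> \<le> M * (inverse (real (Suc m)) + inverse (real (Suc n)))"
      using W_err M_nonneg by (intro mult_left_mono add_mono)
    finally show ?thesis by (simp add: distrib_left)
  qed
  define w where "w k = lim (\<lambda>n. W n k)" for k
  have W_lim: "(\<lambda>n. W n k) \<longlonglongrightarrow> w k" for k
  proof -
    have "Cauchy (\<lambda>n. W n k)"
      by (rule Cauchy_if_dist_le_add[OF dist_W])
         (intro tendsto_mult_right_zero LIMSEQ_inverse_real_of_nat)
    then show ?thesis unfolding w_def by (simp add: Cauchy_convergent_iff convergent_LIMSEQ_iff)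
  qed
  moreover have "square_summable w"
  proof (rule square_summable_pointwise_limit[OF W W_lim])
    fix n
    have "l2_norm (W n) \<le> M * l2_norm (T (W n))"
      by (rule l2_norm_le_l2_norm_T[OF W])
    also have "T (W n) = (\<lambda>k. u k + R n k)" by (simp add: R_def)
    also have "M * l2_norm \<dots> \<le> M * (l2_norm u + 1)"
    proof (rule mult_left_mono[OF _ M_nonneg])
      have "inverse (real (Suc n)) \<le> 1" by (simp add: inverse_le_1_iff)
      then show "l2_norm (\<lambda>k. u k + R n k) \<le> l2_norm u + 1"
        using l2_norm_add_le[OF u R, of n] W_err[of n] unfolding R_def by linarith
    qed
    finally show "l2_norm (W n) \<le> M * (l2_norm u + 1)" .
  qed
  ultimately show ?thesis using that by blast
qed

lemma T_surj:
  assumes u: "square_summable u"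
  obtains w where "square_summable w" "T w = u"
proof -
  have "\<exists>w. square_summable w \<and> l2_norm (\<lambda>k. T w k - u k) \<le> inverse (real (Suc n))" for n
    by (rule approximate_solution[OF u, of "inverse (real (Suc n))"]) auto
  then obtain W where W: "\<And>n. square_summable (W n)"
    and W_err: "\<And>n. l2_norm (\<lambda>k. T (W n) k - u k) \<le> inverse (real (Suc n))"
    by (metis (no_types))
  obtain w where W_lim: "\<And>k. (\<lambda>n. W n k) \<longlonglongrightarrow> w k" and w: "square_summable w"
    using limit_of_approximate_solutions[OF u W W_err] by blast
  have "T w = u"
  proof
    fix k
    have "norm (T (W n) k - u k) \<le> inverse (real (Suc n))" for n
      using norm_le_l2_norm[OF square_summable_diff[OF square_summable_T[OF W] u], of n k] W_err[of n]
      by simp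
    then have "(\<lambda>n. T (W n) k - u k) \<longlonglongrightarrow> 0"
      by (intro Lim_null_comparison[OF _ LIMSEQ_inverse_real_of_nat]) (simp add: always_eventually)
    then have "(\<lambda>n. (T (W n) k - u k) + u k) \<longlonglongrightarrow> 0 + u k" by (intro tendsto_add tendsto_const)
    then have "(\<lambda>n. T (W n) k) \<longlonglongrightarrow> u k" by simp
    moreover have "(\<lambda>n. T (W n) k) \<longlonglongrightarrow> T w k"
      unfolding scaled_tau_minus_A_def
      by (intro tendsto_diff tendsto_scaleR tendsto_const A.tendsto W_lim)
    ultimately show "T w k = u k" using LIMSEQ_unique by metis
  qed
  then show ?thesis using w that by blast
qed

lemma T_inj:
  assumes "square_summable v" "square_summable w" "T v = T w"
  shows "v = w"
proof
  fix k
  have "l2_norm (\<lambda>k. v k - w k) \<le> M * l2_norm (T (\<lambda>k. v k - w k))"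
    by (rule l2_norm_le_l2_norm_T[OF square_summable_diff[OF assms(1,2)]])
  also have "T (\<lambda>k. v k - w k) = (\<lambda>k. 0)"
    using assms(3) by (simp add: scaled_tau_minus_A_diff[OF A.linear_axioms])
  finally have "l2_norm (\<lambda>k. v k - w k) \<le> 0" by (simp add: l2_norm_def)
  then have "norm (v k - w k) \<le> 0"
    using norm_le_l2_norm[OF square_summable_diff[OF assms(1,2)], of k] by linarith
  then show "v k = w k" by simp
qed

definition T_inv :: "(int \<Rightarrow> 'h) \<Rightarrow> int \<Rightarrow> 'h" where
  "T_inv u = (SOME w. square_summable w \<and> T w = u)"

lemma
  assumes "square_summable u"
  shows square_summable_T_inv: "square_summable (T_inv u)"
    and T_T_inv: "T (T_inv u) = u"
  using someI_ex[of "\<lambda>w. square_summable w \<and> T w = u"] T_surj[OF assms]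
  unfolding T_inv_def by blast+

lemma T_inv_T:
  assumes "square_summable v"
  shows "T_inv (T v) = v"
  using T_inj[OF square_summable_T_inv assms T_T_inv] square_summable_T[OF assms]
  by blast

lemma l2_norm_T_inv_diff_le:
  assumes "square_summable u" "square_summable v"
  shows "l2_norm (\<lambda>k. T_inv u k - T_inv v k) \<le> M * l2_norm (\<lambda>k. u k - v k)"
  using l2_norm_le_l2_norm_T[OF square_summable_diff[OF square_summable_T_inv[OF assms(1)]
        square_summable_T_inv[OF assms(2)]]]
  by (simp add: scaled_tau_minus_A_diff[OF A.linear_axioms] T_T_inv assms)

section \<open>The Lyapunov--Perron operator\<close>

definition tau_minus_A_inv :: "(int \<Rightarrow> 'h) \<Rightarrow> int \<Rightarrow> 'h" where
  "tau_minus_A_inv u = from_l2 \<rho> (T_inv (to_l2 \<rho> u))"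

lemma
  assumes "u \<in> l2rho \<rho>"
  shows l2rho_tau_minus_A_inv: "tau_minus_A_inv u \<in> l2rho \<rho>"
    and tau_minus_A_tau_minus_A_inv: "tau_minus_A A (tau_minus_A_inv u) = u"
    and tau_minus_A_inv_tau_minus_A: "tau_minus_A_inv (tau_minus_A A u) = u"
proof -
  have u: "square_summable (to_l2 \<rho> u)"
    using assms rho_pos by (simp add: l2rho_iff_square_summable)
  show "tau_minus_A_inv u \<in> l2rho \<rho>"
    using rho_pos square_summable_T_inv[OF u]
    by (simp add: tau_minus_A_inv_def l2rho_iff_square_summable)
  have "to_l2 \<rho> (tau_minus_A A (tau_minus_A_inv u)) = to_l2 \<rho> u"
    using rho_pos T_T_inv[OF u] by (simp add: tau_minus_A_inv_def to_l2_tau_minus_A A.linear_axioms)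
  then show "tau_minus_A A (tau_minus_A_inv u) = u"
    using rho_pos by (metis from_l2_to_l2)
  show "tau_minus_A_inv (tau_minus_A A u) = u"
    using rho_pos T_inv_T[OF u] by (simp add: tau_minus_A_inv_def to_l2_tau_minus_A A.linear_axioms)
qed

lemma l2rho_norm_tau_minus_A_inv_diff_le:
  assumes "u \<in> l2rho \<rho>" "v \<in> l2rho \<rho>"
  shows "l2rho_norm \<rho> (\<lambda>k. tau_minus_A_inv u k - tau_minus_A_inv v k)
    \<le> M * l2rho_norm \<rho> (\<lambda>k. u k - v k)"
  using assms rho_pos l2_norm_T_inv_diff_le
  by (simp add: l2rho_iff_square_summable l2rho_norm_eq_l2_norm to_l2_diff tau_minus_A_inv_def)

lemma lyapunov_perron_lipschitz:
  fixes F :: "(int \<Rightarrow> 'h) \<Rightarrow> int \<Rightarrow> 'h"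
  assumes F_maps: "\<And>u. u \<in> l2rho \<rho> \<Longrightarrow> F u \<in> l2rho \<rho>"
    and F_lip: "\<And>u v. u \<in> l2rho \<rho> \<Longrightarrow> v \<in> l2rho \<rho> \<Longrightarrow>
                  l2rho_norm \<rho> (\<lambda>n. F u n - F v n) \<le> Lip * l2rho_norm \<rho> (\<lambda>n. u n - v n)"
    and u: "u \<in> l2rho \<rho>" and v: "v \<in> l2rho \<rho>"
  shows "l2rho_norm \<rho> (\<lambda>n. chi_nonneg (tau_minus_A_inv (\<lambda>m. F u m + delta_m1 x m)) n
                           - chi_nonneg (tau_minus_A_inv (\<lambda>m. F v m + delta_m1 x m)) n)
           \<le> M * max Lip 0 * l2rho_norm \<rho> (\<lambda>n. u n - v n)"
proof -
  define a where "a = (\<lambda>m. F u m + delta_m1 x m)"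
  define b where "b = (\<lambda>m. F v m + delta_m1 x m)"
  have ab: "a \<in> l2rho \<rho>" "b \<in> l2rho \<rho>"
    unfolding a_def b_def using F_maps u v l2rho_delta_m1[OF rho_pos, of x]
    by (auto intro!: l2rho_add[OF rho_pos])
  have "l2rho_norm \<rho> (\<lambda>n. chi_nonneg (tau_minus_A_inv a) n - chi_nonneg (tau_minus_A_inv b) n)
      \<le> l2rho_norm \<rho> (\<lambda>n. tau_minus_A_inv a n - tau_minus_A_inv b n)"
    unfolding chi_nonneg_diff[symmetric] using rho_pos
    by (intro l2rho_norm_chi_nonneg_le l2rho_iff_square_summable[THEN iffD2])
       (simp_all add: to_l2_diff square_summable_diff l2rho_iff_square_summable[symmetric]
         l2rho_tau_minus_A_inv ab)
  also have "\<dots> \<le> M * l2rho_norm \<rho> (\<lambda>n. a n - b n)"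
    by (rule l2rho_norm_tau_minus_A_inv_diff_le[OF ab])
  also have "(\<lambda>n. a n - b n) = (\<lambda>n. F u n - F v n)" by (simp add: a_def b_def)
  also have "M * l2rho_norm \<rho> \<dots> \<le> M * (max Lip 0 * l2rho_norm \<rho> (\<lambda>n. u n - v n))"
  proof (rule mult_left_mono[OF _ M_nonneg])
    have "0 \<le> l2rho_norm \<rho> (\<lambda>n. u n - v n)"
      using rho_pos by (simp add: l2rho_norm_eq_l2_norm l2_norm_nonneg)
    then show "l2rho_norm \<rho> (\<lambda>n. F u n - F v n) \<le> max Lip 0 * l2rho_norm \<rho> (\<lambda>n. u n - v n)"
      using F_lip[OF u v] by (smt (verit) mult_right_mono max.cobounded1)
  qed
  finally show ?thesis by (simp add: a_def b_def mult.assoc)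
qed

end

theorem theorem4p5:
  fixes J :: "'h::{real_inner, complete_space} \<Rightarrow> 'h"
    and A :: "'h \<Rightarrow> 'h"
    and \<rho> :: real
    and F :: "(int \<Rightarrow> 'h) \<Rightarrow> (int \<Rightarrow> 'h)"
    and Lip :: real
  assumes sep: "separable_space (euclidean :: 'h topology)"
    and J: "complex_structure J"
    and A: "bounded_clinear_op J A"
    and rho: "\<rho> > 0"
    and spec: "spectrum J A \<inter> sphere 0 \<rho> = {}"
    and F_maps: "\<And>u. u \<in> l2rho \<rho> \<Longrightarrow> F u \<in> l2rho \<rho>"
    and F_lip: "\<And>u v. u \<in> l2rho \<rho> \<Longrightarrow> v \<in> l2rho \<rho> \<Longrightarrow>
                  l2rho_norm \<rho> (\<lambda>n. F u n - F v n) \<le> Lip * l2rho_norm \<rho> (\<lambda>n. u n - v n)"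
    and Lip_small: "Lip < 1 / (SUP z\<in>sphere 0 \<rho>. onorm (resolvent J A z))"
  shows "\<exists>G. (\<forall>u \<in> l2rho \<rho>. G u \<in> l2rho \<rho> \<and> tau_minus_A A (G u) = u
                              \<and> G (tau_minus_A A u) = u)
           \<and> (\<forall>x u. u \<in> l2rho \<rho> \<longrightarrow>
                 chi_nonneg (G (\<lambda>n. F u n + delta_m1 x n)) \<in> l2rho \<rho>)
           \<and> (\<forall>x. \<exists>c<1. \<forall>u \<in> l2rho \<rho>. \<forall>v \<in> l2rho \<rho>.
                 l2rho_norm \<rho> (\<lambda>n. chi_nonneg (G (\<lambda>m. F u m + delta_m1 x m)) n
                                  - chi_nonneg (G (\<lambda>m. F v m + delta_m1 x m)) n)
                   \<le> c * l2rho_norm \<rho> (\<lambda>n. u n - v n))"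
proof -
  \<comment> \<open>The supremum \<open>M\<close> is meaningful only because
    the resolvent is bounded on the compact circle.\<close>
  define M where "M = (SUP z\<in>sphere 0 \<rho>. onorm (resolvent J A z))"
  interpret complex_hilbert J by unfold_locales (rule J)
  have "bdd_above ((\<lambda>z. onorm (resolvent J A z)) ` sphere 0 \<rho>)"
    using spec by (intro bdd_above_onorm_resolvent) auto
  then interpret circle_resolvent_bound J A \<rho> M
    using A rho spec by unfold_locales (auto simp: M_def intro: cSUP_upper)
  have "M * max Lip 0 < 1"
    using mult_max_zero_less_one[OF M_nonneg] Lip_small by (simp add: M_def)
  then show ?thesis
    using l2rho_tau_minus_A_inv tau_minus_A_tau_minus_A_inv tau_minus_A_inv_tau_minus_A
      lyapunov_perron_lipschitz[OF F_maps F_lip]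
      l2rho_chi_nonneg[OF rho l2rho_tau_minus_A_inv[OF l2rho_add[OF rho F_maps l2rho_delta_m1[OF rho]]]]
    by (intro exI[of _ tau_minus_A_inv]) blast
qed

end
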